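(* For $N$ a positive integer let $J_N$ be the number of vectors $(\delta_0,\ldots,\delta_N)\in\{-1,1\}^{N+1}$ with $\sum_{i=0}^N\delta_i\binom{N}{i}=0$. Then for $N=2^n$ with $n\ge 3$ sufficiently large, $$J_{2^n}\le 0.3258\cdot 2^{3\cdot 2^{n-2}-\frac{n-3}{2}}.$$ *)

theory Defs
  imports Complex_Main
begin

definition J :: "nat \<Rightarrow> nat" where
  "J N = card {ds :: int list. length ds = N + 1 \<and> set ds \<subseteq> {-1, 1} \<and>
              (\<Sum>i\<le>N. ds ! i * int (N choose i)) = 0}"

end

theory Submission
  imports Defs
begin

(* Below a third of the row, binomial coefficients at least double from one to the next, so
   C(N,0), ..., C(N,m) is superincreasing whenever 3m <= N + 1.  In a vanishing signed sum the
   signs at positions 0..m are then determined by the remaining N - m signs, giving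
   J N <= 2^(N - m).  For N = 2^n the choice m = 2^(n-2) + n yields J N <= 2^(3 * 2^(n-2) - n),
   which is below the claimed bound for n >= 7. *)

lemma binomial_Suc_ge_double:
  assumes "3 * k + 2 \<le> N"
  shows "2 * (N choose k) \<le> N choose Suc k"
proof -
  have "Suc k * 2 \<le> N - k" using assms by simp
  then have "Suc k * (2 * (N choose k)) \<le> (N - k) * (N choose k)"
    by (metis mult.assoc mult_le_mono1)
  also have "\<dots> = Suc k * (N choose Suc k)"
    by (simp only: binomial_absorption binomial_absorb_comp)
  finally show ?thesis by (simp only: mult_le_cancel1)
qed

lemma sum_binomial_less_next:
  assumes "3 * k + 2 \<le> N"
  shows "(\<Sum>j\<le>k. N choose j) < N choose Suc k"
  using assms
proof (induction k)
  case 0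
  then show ?case by simp
next
  case (Suc k)
  have "(\<Sum>j\<le>Suc k. N choose j) < (N choose Suc k) + (N choose Suc k)"
    using Suc by simp
  also have "\<dots> \<le> N choose Suc (Suc k)"
    using binomial_Suc_ge_double[OF Suc.prems] by simp
  finally show ?case .
qed

lemma superincreasing_sign_expansion_unique:
  fixes w d e :: "nat \<Rightarrow> 'a::linordered_idom"
  assumes "\<And>j. j \<le> k \<Longrightarrow> 0 < w j"
    and "\<And>i. i < k \<Longrightarrow> (\<Sum>j\<le>i. w j) < w (Suc i)"
    and "\<And>j. j \<le> k \<Longrightarrow> d j \<in> {-1, 1} \<and> e j \<in> {-1, 1}"
    and "(\<Sum>j\<le>k. d j * w j) = (\<Sum>j\<le>k. e j * w j)"
    and "j \<le> k"
  shows "d j = e j"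
  using assms
proof (induction k arbitrary: j)
  case 0
  then show ?case by simp
next
  case (Suc k)
  have low_bound: "\<bar>\<Sum>j\<le>k. (d j - e j) * w j\<bar> \<le> 2 * (\<Sum>j\<le>k. w j)"
  proof -
    have "\<bar>\<Sum>j\<le>k. (d j - e j) * w j\<bar> \<le> (\<Sum>j\<le>k. \<bar>(d j - e j) * w j\<bar>)"
      by (rule sum_abs)
    also have "\<dots> \<le> (\<Sum>j\<le>k. 2 * w j)"
    proof (rule sum_mono)
      fix j assume "j \<in> {..k}"
      with Suc.prems(1,3) have "d j \<in> {-1, 1}" "e j \<in> {-1, 1}" "0 < w j" by auto
      then show "\<bar>(d j - e j) * w j\<bar> \<le> 2 * w j" by (auto simp: abs_mult)
    qed
    finally show ?thesis by (simp add: sum_distrib_left)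
  qed
  have diff_zero: "(\<Sum>j\<le>k. (d j - e j) * w j) + (d (Suc k) - e (Suc k)) * w (Suc k) = 0"
    using Suc.prems(4) by (simp add: left_diff_distrib sum_subtractf)
  have top: "d (Suc k) = e (Suc k)"
  proof (rule ccontr)
    assume "d (Suc k) \<noteq> e (Suc k)"
    moreover have "d (Suc k) \<in> {-1, 1}" "e (Suc k) \<in> {-1, 1}" "0 < w (Suc k)"
      using Suc.prems(1,3) by auto
    ultimately have "\<bar>(d (Suc k) - e (Suc k)) * w (Suc k)\<bar> = 2 * w (Suc k)"
      by (auto simp: abs_mult)
    moreover have "(\<Sum>j\<le>k. w j) < w (Suc k)" using Suc.prems(2) by simp
    ultimately show False
      using low_bound diff_zero by (simp add: eq_neg_iff_add_eq_0[symmetric])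
  qed
  have "(\<Sum>j\<le>k. d j * w j) = (\<Sum>j\<le>k. e j * w j)"
    using Suc.prems(4) top by simp
  then have "d j = e j" if "j \<le> k" for j
    using Suc.IH[of j] Suc.prems(1-3) that by simp
  then show ?case using top Suc.prems(5) le_Suc_eq by auto
qed

definition binomial_sign_solutions :: "nat \<Rightarrow> int list set" where
  "binomial_sign_solutions N = {ds. length ds = N + 1 \<and> set ds \<subseteq> {-1, 1} \<and>
     (\<Sum>i\<le>N. ds ! i * int (N choose i)) = 0}"

lemma J_eq_card_binomial_sign_solutions: "J N = card (binomial_sign_solutions N)"
  by (simp add: J_def binomial_sign_solutions_def)

lemma binomial_sign_solution_determined_by_tail:
  assumes "3 * m \<le> N + 1"
    and ds: "ds \<in> binomial_sign_solutions N" and es: "es \<in> binomial_sign_solutions N"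
    and tail: "drop (Suc m) ds = drop (Suc m) es"
  shows "ds = es"
proof -
  have len: "length ds = N + 1" "length es = N + 1"
    using ds es by (auto simp: binomial_sign_solutions_def)
  have signs: "ds ! j \<in> {-1, 1} \<and> es ! j \<in> {-1, 1}" if "j \<le> N" for j
  proof -
    have "ds ! j \<in> set ds" "es ! j \<in> set es" using len that by simp_all
    then show ?thesis using ds es by (auto simp: binomial_sign_solutions_def)
  qed
  have high: "ds ! j = es ! j" if "m < j" "j \<le> N" for j
    using arg_cong[OF tail, of "\<lambda>xs. xs ! (j - Suc m)"] that len by simp
  have mN: "m \<le> N" using assms(1) by linarith
  have split: "(\<Sum>j\<le>N. f j) = (\<Sum>j\<le>m. f j) + (\<Sum>j = Suc m..N. f j)" for f :: "nat \<Rightarrow> int"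
    using sum_up_index_split[of f m "N - m"] mN by simp
  have low_sums: "(\<Sum>j\<le>m. ds ! j * int (N choose j)) = (\<Sum>j\<le>m. es ! j * int (N choose j))"
  proof -
    have "(\<Sum>j = Suc m..N. ds ! j * int (N choose j)) = (\<Sum>j = Suc m..N. es ! j * int (N choose j))"
      by (rule sum.cong) (auto simp: high)
    moreover have "(\<Sum>j\<le>N. ds ! j * int (N choose j)) = (\<Sum>j\<le>N. es ! j * int (N choose j))"
      using ds es by (simp add: binomial_sign_solutions_def)
    ultimately show ?thesis by (simp only: split)
  qed
  have low: "ds ! j = es ! j" if "j \<le> m" for j
  proof (rule superincreasing_sign_expansion_unique
      [where w = "\<lambda>j. int (N choose j)" and d = "(!) ds" and e = "(!) es" and k = m])
    show "\<And>j. j \<le> m \<Longrightarrow> 0 < int (N choose j)" using mN by simp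
    show "(\<Sum>j\<le>i. int (N choose j)) < int (N choose Suc i)" if "i < m" for i
      using sum_binomial_less_next[of i N] that assms(1) by (simp flip: of_nat_sum)
    show "\<And>j. j \<le> m \<Longrightarrow> ds ! j \<in> {-1, 1} \<and> es ! j \<in> {-1, 1}" using signs mN by simp
  qed (use low_sums that in simp_all)
  show ?thesis
  proof (rule nth_equalityI)
    show "length ds = length es" using len by simp
    fix j assume "j < length ds"
    then show "ds ! j = es ! j" using len low high by (cases "j \<le> m") auto
  qed
qed

lemma J_le_two_power:
  assumes "3 * m \<le> N + 1"
  shows "J N \<le> 2 ^ (N - m)"
proof -
  let ?T = "{xs :: int list. set xs \<subseteq> {-1, 1} \<and> length xs = N - m}"
  have "inj_on (drop (Suc m)) (binomial_sign_solutions N)"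
    using binomial_sign_solution_determined_by_tail[OF assms] by (rule inj_onI)
  moreover have "drop (Suc m) ` binomial_sign_solutions N \<subseteq> ?T"
    by (auto simp: binomial_sign_solutions_def dest: in_set_dropD)
  moreover have "finite ?T" by (rule finite_lists_length_eq) simp
  ultimately have "card (binomial_sign_solutions N) \<le> card ?T"
    by (rule card_inj_on_le)
  also have "card ?T = 2 ^ (N - m)"
    using card_lists_length_eq[of "{-1, 1 :: int}" "N - m"] by (simp add: numeral_2_eq_2)
  finally show ?thesis by (simp add: J_eq_card_binomial_sign_solutions)
qed

lemma linear_le_two_power:
  assumes "5 \<le> q"
  shows "3 * q + 6 \<le> (2::nat) ^ q"
  using assms by (induction q rule: dec_induct) simp_all

theorem theorem5:
  shows "\<exists>n0\<ge>3. \<forall>n\<ge>n0.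
    real (J (2 ^ n)) \<le> 0.3258 * 2 powr (3 * 2 ^ (n - 2) - (real n - 3) / 2)"
proof (intro exI[of _ 7] conjI allI impI)
  fix n :: nat assume n: "7 \<le> n"
  define q where "q = n - 2"
  define E where "E = 3 * 2 ^ q - (real n - 3) / 2"
  have n_eq: "n = q + 2" using n by (simp add: q_def)
  have q_bound: "3 * q + 6 \<le> 2 ^ q" using n by (intro linear_le_two_power) (simp add: q_def)
  have "J (2 ^ n) \<le> 2 ^ (2 ^ n - (2 ^ q + n))"
    using q_bound by (intro J_le_two_power) (simp add: n_eq)
  also have "2 ^ n - (2 ^ q + n) = 3 * 2 ^ q - n"
    using q_bound by (simp add: n_eq)
  finally have "real (J (2 ^ n)) \<le> 2 powr real (3 * 2 ^ q - n)"
    by (simp add: powr_realpow flip: of_nat_le_iff)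
  also have "real (3 * 2 ^ q - n) = 3 * 2 ^ q - real n"
    using q_bound by (simp add: of_nat_diff n_eq)
  also have "2 powr (3 * 2 ^ q - real n) = 2 powr (E + - (real n + 3) / 2)"
    by (rule arg_cong[where f = "\<lambda>x. 2 powr x"]) (simp add: E_def field_simps)
  also have "\<dots> = 2 powr E * 2 powr (- (real n + 3) / 2)"
    by (rule powr_add)
  also have "\<dots> \<le> 2 powr E * 2 powr (-5)"
    using n by (intro mult_left_mono powr_mono) auto
  also have "\<dots> \<le> 0.3258 * 2 powr E"
    by (simp add: powr_minus powr_realpow)
  finally show "real (J (2 ^ n)) \<le> 0.3258 * 2 powr (3 * 2 ^ (n - 2) - (real n - 3) / 2)"
    by (simp add: E_def q_def)
qed simp

end
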